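(* Let $(T_1,T_2)$ be a commuting pair of contractions on a complex Banach space $\mathbb X$ such that for $i=1,2$ the function $A_{T_i}(x)=(\|x\|^2-\|T_ix\|^2)^{1/2}$ defines a norm on $\mathbb X$. Put $\mathbb X_i=(\mathbb X,A_{T_i})$ for $i=1,2$, and consider the subspaces of $\mathbb X_1\oplus_2\mathbb X_2$ $$\widehat M_1=\{(T_2x,x):x\in\mathbb X\},\qquad \widehat M_2=\{(x,T_1x):x\in\mathbb X\}.$$ Suppose $\|T_1T_2\|<1$. Then: (i) with $T=T_1T_2$, the function $A_T(x)=(\|x\|^2-\|Tx\|^2)^{1/2}$ defines a norm on $\mathbb X$; (ii) $\widehat M_1$ and $\widehat M_2$ are closed in $\mathbb X_1\oplus_2\mathbb X_2$ and $\widehat M_1\cap\widehat M_2=\{\mathbf 0\}$; (iii) if there exist subspaces $\mathbb Y_1,\mathbb Y_2$ of $\mathbb X_1\oplus_2\mathbb X_2$ and a surjective linear isometry $\mathbb Y_1\to\mathbb Y_2$ such that $\widehat M_1\oplus_2\mathbb Y_1=\mathbb X_1\oplus_2\mathbb X_2=\widehat M_2\oplus_2\mathbb Y_2$, then there is a unitary $S$ on $\mathbb X_1\oplus_2\mathbb X_2$ with $S(\widehat M_1)=\widehat M_2$, more precisely $S(T_2x,x)=(x,T_1x)$ for all $x\in\mathbb X$.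
   Context: For a contraction $T$ on a normed space $\mathbb X$, $A_T:\mathbb X\to[0,\infty)$ is $A_T(x)=(\|x\|^2-\|Tx\|^2)^{1/2}$; "$A_T$ defines a norm" means $A_T$ is a norm on the vector space $\mathbb X$, and $(\mathbb X,A_T)$ denotes $\mathbb X$ equipped with this norm. $\mathbb X_1\oplus_2\mathbb X_2$ is the space of pairs with norm $\|(x_1,x_2)\|=(\|x_1\|^2+\|x_2\|^2)^{1/2}$. A unitary on a normed space is a surjective linear isometry. For subspaces $M,Y$ of a normed space $Z$, $M\oplus_2 Y=Z$ means every $z\in Z$ is uniquely $z=m+y$ with $m\in M$, $y\in Y$, and $\|m+y\|^2=\|m\|^2+\|y\|^2$ for all $m\in M,y\in Y$. *)

theory Defs
  imports "HOL-Analysis.Analysis"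
begin

class complex_vector = real_vector +
  fixes scaleC :: "complex \<Rightarrow> 'a \<Rightarrow> 'a" (infixr "*\<^sub>C" 75)
  assumes scaleC_add_right: "a *\<^sub>C (x + y) = a *\<^sub>C x + a *\<^sub>C y"
    and scaleC_add_left: "(a + b) *\<^sub>C x = a *\<^sub>C x + b *\<^sub>C x"
    and scaleC_scaleC: "a *\<^sub>C (b *\<^sub>C x) = (a * b) *\<^sub>C x"
    and scaleC_one: "1 *\<^sub>C x = x"
    and scaleR_scaleC: "scaleR r x = complex_of_real r *\<^sub>C x"

class complex_normed_vector = complex_vector + real_normed_vector +
  assumes norm_scaleC: "norm (a *\<^sub>C x) = cmod a * norm x"

instantiation prod :: (complex_vector, complex_vector) complex_vector
begin
definition scaleC_prod_def: "a *\<^sub>C p = (a *\<^sub>C fst p, a *\<^sub>C snd p)"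
instance
  by standard (auto simp: scaleC_prod_def scaleC_add_right scaleC_add_left
      scaleC_scaleC complex_vector_class.scaleC_one scaleR_scaleC prod_eq_iff scaleR_prod_def)
end

definition clinear_map :: "('a::complex_vector \<Rightarrow> 'b::complex_vector) \<Rightarrow> bool" where
  "clinear_map T \<longleftrightarrow> (\<forall>x y. T (x + y) = T x + T y) \<and> (\<forall>c x. T (c *\<^sub>C x) = c *\<^sub>C T x)"

definition contraction :: "('a::complex_normed_vector \<Rightarrow> 'a) \<Rightarrow> bool" where
  "contraction T \<longleftrightarrow> clinear_map T \<and> (\<forall>x. norm (T x) \<le> norm x)"

definition defect :: "('a::complex_normed_vector \<Rightarrow> 'a) \<Rightarrow> 'a \<Rightarrow> real" where
  "defect T x = sqrt ((norm x)\<^sup>2 - (norm (T x))\<^sup>2)"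

definition is_norm :: "('a::complex_vector \<Rightarrow> real) \<Rightarrow> bool" where
  "is_norm N \<longleftrightarrow> (\<forall>x. 0 \<le> N x) \<and> (\<forall>x. N x = 0 \<longleftrightarrow> x = 0)
     \<and> (\<forall>x y. N (x + y) \<le> N x + N y) \<and> (\<forall>c x. N (c *\<^sub>C x) = cmod c * N x)"

definition sum2_norm :: "('a::complex_normed_vector \<Rightarrow> 'a) \<Rightarrow> ('a \<Rightarrow> 'a) \<Rightarrow> 'a \<times> 'a \<Rightarrow> real" where
  "sum2_norm T1 T2 p = sqrt ((defect T1 (fst p))\<^sup>2 + (defect T2 (snd p))\<^sup>2)"

definition closed_wrt :: "('a::complex_vector \<Rightarrow> real) \<Rightarrow> 'a set \<Rightarrow> bool" where
  "closed_wrt N M \<longleftrightarrow>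
     (\<forall>f z. (\<forall>n. f n \<in> M) \<and> (\<lambda>n. N (f n - z)) \<longlonglongrightarrow> 0 \<longrightarrow> z \<in> M)"

definition csubspace_set :: "'a::complex_vector set \<Rightarrow> bool" where
  "csubspace_set S \<longleftrightarrow> 0 \<in> S \<and> (\<forall>x\<in>S. \<forall>y\<in>S. x + y \<in> S) \<and> (\<forall>c. \<forall>x\<in>S. c *\<^sub>C x \<in> S)"

definition orth_sum_eq :: "('a::complex_vector \<Rightarrow> real) \<Rightarrow> 'a set \<Rightarrow> 'a set \<Rightarrow> bool" where
  "orth_sum_eq N M Y \<longleftrightarrow>
     (\<forall>z. \<exists>!p. fst p \<in> M \<and> snd p \<in> Y \<and> z = fst p + snd p) \<and>
     (\<forall>m\<in>M. \<forall>y\<in>Y. (N (m + y))\<^sup>2 = (N m)\<^sup>2 + (N y)\<^sup>2)"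

definition surj_lin_isometry_on :: "('a::complex_vector \<Rightarrow> real) \<Rightarrow> 'a set \<Rightarrow> 'a set \<Rightarrow> ('a \<Rightarrow> 'a) \<Rightarrow> bool" where
  "surj_lin_isometry_on N Y1 Y2 U \<longleftrightarrow> U ` Y1 = Y2 \<and>
     (\<forall>x\<in>Y1. \<forall>y\<in>Y1. U (x + y) = U x + U y) \<and> (\<forall>c. \<forall>x\<in>Y1. U (c *\<^sub>C x) = c *\<^sub>C U x) \<and>
     (\<forall>x\<in>Y1. N (U x) = N x)"

definition unitary_wrt :: "('a::complex_vector \<Rightarrow> real) \<Rightarrow> ('a \<Rightarrow> 'a) \<Rightarrow> bool" where
  "unitary_wrt N S \<longleftrightarrow> clinear_map S \<and> surj S \<and> (\<forall>x. N (S x) = N x)"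

end

theory Submission
  imports Defs
begin

text \<open>
  For commuting contractions and \<open>T = T\<^sub>1 T\<^sub>2\<close> one has
  \<open>A\<^sub>T(x)\<^sup>2 = A\<^sub>T\<^sub>1(T\<^sub>2 x)\<^sup>2 + A\<^sub>T\<^sub>2(x)\<^sup>2 = A\<^sub>T\<^sub>1(x)\<^sup>2 + A\<^sub>T\<^sub>2(T\<^sub>1 x)\<^sup>2\<close>, i.e. both
  \<open>x \<mapsto> (T\<^sub>2 x, x)\<close> and \<open>x \<mapsto> (x, T\<^sub>1 x)\<close> are isometries from \<open>(X, A\<^sub>T)\<close> into
  \<open>X\<^sub>1 \<oplus>\<^sub>2 X\<^sub>2\<close>. The first one pulls the norm of \<open>X\<^sub>1 \<oplus>\<^sub>2 X\<^sub>2\<close> back to \<open>A\<^sub>T\<close>, so \<open>A\<^sub>T\<close>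
  is a norm; together they make \<open>(T\<^sub>2 x, x) \<mapsto> (x, T\<^sub>1 x)\<close> an isometry of \<open>M\<^sub>1\<close> onto
  \<open>M\<^sub>2\<close>, which glued with the isometry \<open>Y\<^sub>1 \<rightarrow> Y\<^sub>2\<close> of the complements gives the
  unitary. The hypothesis \<open>\<parallel>T\<parallel> < 1\<close> yields \<open>A\<^sub>T(x) \<ge> sqrt (1 - \<parallel>T\<parallel>\<^sup>2) \<parallel>x\<parallel>\<close>, so for a
  sequence \<open>(T\<^sub>2 x\<^sub>n, x\<^sub>n)\<close> or \<open>(x\<^sub>n, T\<^sub>1 x\<^sub>n)\<close> converging in \<open>X\<^sub>1 \<oplus>\<^sub>2 X\<^sub>2\<close> the \<open>x\<^sub>n\<close> are
  Cauchy in the complete space \<open>X\<close>; as \<open>A\<^sub>T\<^sub>i \<le> \<parallel>\<cdot>\<parallel>\<close>, the limit lies in \<open>M\<^sub>i\<close> again.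
  It also makes \<open>0\<close> the only fixed point of \<open>T\<close>, hence the only point of \<open>M\<^sub>1 \<inter> M\<^sub>2\<close>.
\<close>

lemma clinear_map_add: "clinear_map T \<Longrightarrow> T (x + y) = T x + T y"
  unfolding clinear_map_def by blast

lemma clinear_map_scaleC: "clinear_map T \<Longrightarrow> T (c *\<^sub>C x) = c *\<^sub>C T x"
  unfolding clinear_map_def by blast

lemma clinear_map_scaleR: "clinear_map T \<Longrightarrow> T (r *\<^sub>R x) = r *\<^sub>R T x"
  by (simp add: scaleR_scaleC clinear_map_scaleC)

lemma clinear_map_zero: "clinear_map T \<Longrightarrow> T 0 = 0"
  using clinear_map_add[of T 0 0] by simp

lemma clinear_map_diff: "clinear_map T \<Longrightarrow> T (x - y) = T x - T y"
  by (metis clinear_map_add diff_add_cancel add_diff_cancel)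

lemma clinear_map_comp: "clinear_map S \<Longrightarrow> clinear_map T \<Longrightarrow> clinear_map (S \<circ> T)"
  unfolding clinear_map_def by simp

lemma contraction_clinear_map: "contraction T \<Longrightarrow> clinear_map T"
  unfolding contraction_def by blast

lemma contraction_comp: "contraction S \<Longrightarrow> contraction T \<Longrightarrow> contraction (S \<circ> T)"
  unfolding contraction_def by (auto intro: clinear_map_comp order_trans)

lemma contraction_bounded_linear: "contraction T \<Longrightarrow> bounded_linear T"
  unfolding contraction_def
  by (intro bounded_linear_intro[where K = 1]) (auto simp: clinear_map_add clinear_map_scaleR)

lemma is_norm_nonneg: "is_norm N \<Longrightarrow> 0 \<le> N x"
  unfolding is_norm_def by blast

lemma is_norm_eq_zero_iff: "is_norm N \<Longrightarrow> N x = 0 \<longleftrightarrow> x = 0"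
  unfolding is_norm_def by blast

lemma is_norm_triangle: "is_norm N \<Longrightarrow> N (x + y) \<le> N x + N y"
  unfolding is_norm_def by blast

lemma is_norm_scaleC: "is_norm N \<Longrightarrow> N (c *\<^sub>C x) = cmod c * N x"
  unfolding is_norm_def by blast

lemma is_norm_minus_commute: "is_norm N \<Longrightarrow> N (x - y) = N (y - x)"
proof -
  have "y - x = (-1) *\<^sub>C (x - y)"
    by (metis minus_diff_eq scaleR_minus1_left scaleR_scaleC of_real_1 of_real_minus)
  then show "is_norm N \<Longrightarrow> N (x - y) = N (y - x)"
    by (simp add: is_norm_scaleC)
qed

lemma is_norm_triangle_diff: "is_norm N \<Longrightarrow> N (x - y) \<le> N (x - z) + N (z - y)"
  using is_norm_triangle[of N "x - z" "z - y"] by simp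

lemma is_norm_sqrt_sum_squares:
  assumes P: "is_norm P" and Q: "is_norm Q"
  shows "is_norm (\<lambda>p. sqrt ((P (fst p))\<^sup>2 + (Q (snd p))\<^sup>2))"
  unfolding is_norm_def
proof (intro conjI allI)
  fix p :: "'a \<times> 'b"
  show "sqrt ((P (fst p))\<^sup>2 + (Q (snd p))\<^sup>2) = 0 \<longleftrightarrow> p = 0"
    using is_norm_eq_zero_iff[OF P] is_norm_eq_zero_iff[OF Q] by (simp add: prod_eq_iff)
next
  fix p q :: "'a \<times> 'b"
  have "(P (fst (p + q)))\<^sup>2 \<le> (P (fst p) + P (fst q))\<^sup>2"
    using is_norm_triangle[OF P] is_norm_nonneg[OF P] by (simp add: power_mono)
  moreover have "(Q (snd (p + q)))\<^sup>2 \<le> (Q (snd p) + Q (snd q))\<^sup>2"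
    using is_norm_triangle[OF Q] is_norm_nonneg[OF Q] by (simp add: power_mono)
  ultimately have "sqrt ((P (fst (p + q)))\<^sup>2 + (Q (snd (p + q)))\<^sup>2)
      \<le> sqrt ((P (fst p) + P (fst q))\<^sup>2 + (Q (snd p) + Q (snd q))\<^sup>2)"
    by simp
  also have "\<dots> \<le> sqrt ((P (fst p))\<^sup>2 + (Q (snd p))\<^sup>2) + sqrt ((P (fst q))\<^sup>2 + (Q (snd q))\<^sup>2)"
    by (rule real_sqrt_sum_squares_triangle_ineq)
  finally show "sqrt ((P (fst (p + q)))\<^sup>2 + (Q (snd (p + q)))\<^sup>2)
      \<le> sqrt ((P (fst p))\<^sup>2 + (Q (snd p))\<^sup>2) + sqrt ((P (fst q))\<^sup>2 + (Q (snd q))\<^sup>2)" .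
next
  fix c p
  show "sqrt ((P (fst (c *\<^sub>C p)))\<^sup>2 + (Q (snd (c *\<^sub>C p)))\<^sup>2)
      = cmod c * sqrt ((P (fst p))\<^sup>2 + (Q (snd p))\<^sup>2)"
    by (simp add: scaleC_prod_def is_norm_scaleC[OF P] is_norm_scaleC[OF Q]
        power_mult_distrib real_sqrt_mult flip: distrib_left)
qed simp

lemma is_norm_comp_inj: "is_norm N \<Longrightarrow> clinear_map R \<Longrightarrow> inj R \<Longrightarrow> is_norm (N \<circ> R)"
  unfolding is_norm_def
  by (auto simp: clinear_map_add clinear_map_scaleC clinear_map_zero) (metis clinear_map_zero injD)

lemma is_norm_sum2_norm: "is_norm (defect T1) \<Longrightarrow> is_norm (defect T2) \<Longrightarrow> is_norm (sum2_norm T1 T2)"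
  unfolding sum2_norm_def[abs_def] by (rule is_norm_sqrt_sum_squares)

lemma defect_nonneg: "contraction T \<Longrightarrow> 0 \<le> defect T x"
  unfolding defect_def contraction_def by (simp add: power_mono)

lemma defect_squared: "contraction T \<Longrightarrow> (defect T x)\<^sup>2 = (norm x)\<^sup>2 - (norm (T x))\<^sup>2"
  unfolding defect_def contraction_def by (simp add: power_mono)

lemma defect_le_norm: "defect T x \<le> norm x"
proof -
  have "sqrt ((norm x)\<^sup>2 - (norm (T x))\<^sup>2) \<le> sqrt ((norm x)\<^sup>2)"
    by (rule real_sqrt_le_mono) simp
  then show ?thesis
    unfolding defect_def by simp
qed

lemma defect_comp_squared:
  assumes "contraction T1" and "contraction T2"
  shows "(defect (T1 \<circ> T2) x)\<^sup>2 = (defect T1 (T2 x))\<^sup>2 + (defect T2 x)\<^sup>2"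
  using defect_squared[OF contraction_comp[OF assms]] defect_squared[OF assms(1)]
    defect_squared[OF assms(2)]
  by simp

lemma sum2_norm_ge_fst: "defect T1 (fst p) \<le> sum2_norm T1 T2 p"
  unfolding sum2_norm_def by simp

lemma sum2_norm_ge_snd: "defect T2 (snd p) \<le> sum2_norm T1 T2 p"
  unfolding sum2_norm_def by simp

lemma sum2_norm_graph_left:
  assumes "contraction T1" and "contraction T2"
  shows "sum2_norm T1 T2 (T2 x, x) = defect (T1 \<circ> T2) x"
  using defect_comp_squared[OF assms, of x] defect_nonneg[OF contraction_comp[OF assms]]
  by (simp add: sum2_norm_def real_sqrt_unique)

lemma sum2_norm_graph_right:
  assumes "contraction T1" and "contraction T2" and "T1 \<circ> T2 = T2 \<circ> T1"
  shows "sum2_norm T1 T2 (x, T1 x) = defect (T1 \<circ> T2) x"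
  using defect_comp_squared[OF assms(2,1), of x] defect_nonneg[OF contraction_comp[OF assms(2,1)]]
  by (simp add: assms(3) sum2_norm_def real_sqrt_unique add.commute)

lemma is_norm_defect_comp:
  assumes c1: "contraction T1" and c2: "contraction T2"
    and n1: "is_norm (defect T1)" and n2: "is_norm (defect T2)"
  shows "is_norm (defect (T1 \<circ> T2))"
proof -
  have "defect (T1 \<circ> T2) = sum2_norm T1 T2 \<circ> (\<lambda>x. (T2 x, x))"
    using sum2_norm_graph_left[OF c1 c2] by auto
  moreover have "clinear_map (\<lambda>x. (T2 x, x))"
    using contraction_clinear_map[OF c2] by (simp add: clinear_map_def scaleC_prod_def)
  ultimately show ?thesis
    by (simp add: is_norm_comp_inj is_norm_sum2_norm n1 n2 inj_on_def)
qed

lemma defect_lower_bound: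
  assumes "\<And>x. norm (T x) \<le> k * norm x"
  shows "sqrt (1 - k\<^sup>2) * norm x \<le> defect T x"
proof -
  have "(norm (T x))\<^sup>2 \<le> (k * norm x)\<^sup>2"
    using assms by (simp add: power_mono)
  then have "(1 - k\<^sup>2) * (norm x)\<^sup>2 \<le> (norm x)\<^sup>2 - (norm (T x))\<^sup>2"
    by (simp add: power_mult_distrib algebra_simps)
  then show ?thesis
    unfolding defect_def by (metis real_sqrt_le_mono real_sqrt_mult real_sqrt_abs abs_norm_cancel)
qed

lemma defect_comp_coercive:
  assumes "contraction T1" and "contraction T2"
  shows "sqrt (1 - (onorm (T1 \<circ> T2))\<^sup>2) * norm x \<le> defect T2 x + defect T1 (T2 x)"
proof -
  have "sqrt (1 - (onorm (T1 \<circ> T2))\<^sup>2) * norm x \<le> defect (T1 \<circ> T2) x"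
    by (rule defect_lower_bound) (rule onorm[OF contraction_bounded_linear[OF contraction_comp[OF assms]]])
  also have "\<dots> = sqrt ((defect T1 (T2 x))\<^sup>2 + (defect T2 x)\<^sup>2)"
    using sum2_norm_graph_left[OF assms] by (simp add: sum2_norm_def)
  also have "\<dots> \<le> defect T2 x + defect T1 (T2 x)"
    using sqrt_sum_squares_le_sum defect_nonneg assms by (metis add.commute)
  finally show ?thesis .
qed

lemma sqrt_one_minus_onorm_pos:
  assumes "contraction T" and "onorm T < 1"
  shows "0 < sqrt (1 - (onorm T)\<^sup>2)"
  using onorm_pos_le[OF contraction_bounded_linear[OF assms(1)]] assms(2)
  by (simp add: abs_square_less_1)

lemma fixed_point_eq_zero:
  fixes x :: "'a::real_normed_vector"
  assumes "norm (T x) \<le> k * norm x" and "k < 1" and "T x = x"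
  shows "x = 0"
proof -
  have "(1 - k) * norm x \<le> 0"
    using assms by (simp add: algebra_simps)
  then show ?thesis
    using \<open>k < 1\<close> by (simp add: mult_le_0_iff)
qed

lemma graph_left_inter_graph_right:
  assumes c1: "contraction T1" and c2: "contraction T2" and small: "onorm (T1 \<circ> T2) < 1"
  shows "{(T2 x, x) | x. True} \<inter> {(x, T1 x) | x. True} = {0}"
proof -
  have "x = 0" if "T1 (T2 x) = x" for x
    using fixed_point_eq_zero[of "T1 \<circ> T2" x "onorm (T1 \<circ> T2)"] small that
      onorm[OF contraction_bounded_linear[OF contraction_comp[OF c1 c2]], of x]
    by simp
  then show ?thesis
    using clinear_map_zero[OF contraction_clinear_map[OF c1]]
      clinear_map_zero[OF contraction_clinear_map[OF c2]]
    by (auto simp: zero_prod_def) metis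
qed

lemma coercive_pair_Cauchy:
  fixes x :: "nat \<Rightarrow> 'a::complex_normed_vector"
  assumes P: "is_norm P" and Q: "is_norm Q" and R: "clinear_map R"
    and c: "c > 0" and coercive: "\<And>y. c * norm y \<le> P y + Q (R y)"
    and lim_P: "(\<lambda>n. P (x n - b)) \<longlonglongrightarrow> 0" and lim_Q: "(\<lambda>n. Q (R (x n) - a)) \<longlonglongrightarrow> 0"
  shows "Cauchy x"
proof (rule metric_CauchyI)
  define e where "e n = P (x n - b) + Q (R (x n) - a)" for n
  have e: "e \<longlonglongrightarrow> 0"
    using tendsto_add[OF lim_P lim_Q] unfolding e_def by simp
  have bound: "c * dist (x m) (x n) \<le> e m + e n" for m n
  proof -
    have "P (x m - x n) \<le> P (x m - b) + P (x n - b)"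
      using is_norm_triangle_diff[OF P] is_norm_minus_commute[OF P] by metis
    moreover have "Q (R (x m) - R (x n)) \<le> Q (R (x m) - a) + Q (R (x n) - a)"
      using is_norm_triangle_diff[OF Q] is_norm_minus_commute[OF Q] by metis
    ultimately show ?thesis
      using coercive[of "x m - x n"] clinear_map_diff[OF R] unfolding e_def dist_norm by fastforce
  qed
  fix \<epsilon> :: real
  assume "\<epsilon> > 0"
  then obtain M where M: "\<And>n. n \<ge> M \<Longrightarrow> \<bar>e n\<bar> < c * \<epsilon> / 2"
    using e c unfolding LIMSEQ_iff by (metis half_gt_zero mult_pos_pos diff_zero real_norm_def)
  have "c * dist (x m) (x n) < c * \<epsilon>" if "m \<ge> M" "n \<ge> M" for m n
    using bound[of m n] M[OF that(1)] M[OF that(2)] by linarith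
  then show "\<exists>M. \<forall>m\<ge>M. \<forall>n\<ge>M. dist (x m) (x n) < \<epsilon>"
    using c by auto
qed

lemma dominated_norm_limit_eq:
  assumes P: "is_norm P" and dominated: "\<And>y. P y \<le> norm y"
    and lim_P: "(\<lambda>n. P (x n - b)) \<longlonglongrightarrow> 0" and lim: "x \<longlonglongrightarrow> l"
  shows "b = l"
proof -
  have "P (b - l) \<le> 0"
  proof (rule LIMSEQ_le_const)
    show "(\<lambda>n. P (x n - b) + norm (x n - l)) \<longlonglongrightarrow> 0"
      using tendsto_add[OF lim_P tendsto_norm_zero[OF LIM_zero[OF lim]]] by simp
    have "P (b - l) \<le> P (x n - b) + norm (x n - l)" for n
      using is_norm_triangle_diff[OF P, of b l "x n"] is_norm_minus_commute[OF P, of b "x n"]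
        dominated[of "x n - l"] by simp
    then show "\<exists>N. \<forall>n\<ge>N. P (b - l) \<le> P (x n - b) + norm (x n - l)"
      by blast
  qed
  then show ?thesis
    using is_norm_nonneg[OF P, of "b - l"] is_norm_eq_zero_iff[OF P, of "b - l"] by simp
qed

lemma coercive_graph_limit:
  fixes x :: "nat \<Rightarrow> 'a::{complex_normed_vector, banach}"
  assumes P: "is_norm P" and Q: "is_norm Q"
    and P_le: "\<And>y. P y \<le> norm y" and Q_le: "\<And>y. Q y \<le> norm y"
    and R: "contraction R" and c: "c > 0" and coercive: "\<And>y. c * norm y \<le> P y + Q (R y)"
    and lim_P: "(\<lambda>n. P (x n - b)) \<longlonglongrightarrow> 0" and lim_Q: "(\<lambda>n. Q (R (x n) - a)) \<longlonglongrightarrow> 0"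
  shows "a = R b"
proof -
  have "Cauchy x"
    using coercive_pair_Cauchy[OF P Q contraction_clinear_map[OF R] c coercive lim_P lim_Q] .
  then obtain l where l: "x \<longlonglongrightarrow> l"
    using Cauchy_convergent_iff convergent_def by blast
  have "b = l"
    using dominated_norm_limit_eq[OF P P_le lim_P l] .
  moreover have "(\<lambda>n. R (x n)) \<longlonglongrightarrow> R l"
    using bounded_linear.tendsto[OF contraction_bounded_linear[OF R] l] .
  then have "a = R l"
    using dominated_norm_limit_eq[OF Q Q_le lim_Q] by blast
  ultimately show ?thesis
    by simp
qed

lemma closed_wrt_graph:
  fixes R :: "'a::{complex_normed_vector, banach} \<Rightarrow> 'a"
    and \<pi>\<^sub>1 \<pi>\<^sub>2 :: "'b::complex_vector \<Rightarrow> 'a"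
  assumes P: "is_norm P" and Q: "is_norm Q"
    and "\<And>y. P y \<le> norm y" and "\<And>y. Q y \<le> norm y"
    and "contraction R" and "c > 0" and "\<And>y. c * norm y \<le> P y + Q (R y)"
    and \<pi>\<^sub>1_diff: "\<And>p q. \<pi>\<^sub>1 (p - q) = \<pi>\<^sub>1 p - \<pi>\<^sub>1 q" and \<pi>\<^sub>2_diff: "\<And>p q. \<pi>\<^sub>2 (p - q) = \<pi>\<^sub>2 p - \<pi>\<^sub>2 q"
    and P_le: "\<And>p. P (\<pi>\<^sub>1 p) \<le> N p" and Q_le: "\<And>p. Q (\<pi>\<^sub>2 p) \<le> N p"
  shows "closed_wrt N {p. \<pi>\<^sub>2 p = R (\<pi>\<^sub>1 p)}"
  unfolding closed_wrt_def
proof (intro allI impI, elim conjE)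
  fix f z
  assume graph: "\<forall>n. f n \<in> {p. \<pi>\<^sub>2 p = R (\<pi>\<^sub>1 p)}" and lim: "(\<lambda>n. N (f n - z)) \<longlonglongrightarrow> 0"
  have "(\<lambda>n. P (\<pi>\<^sub>1 (f n) - \<pi>\<^sub>1 z)) \<longlonglongrightarrow> 0"
    using P_le[of "f _ - z"] is_norm_nonneg[OF P]
    by (intro Lim_null_comparison[OF _ lim] always_eventually) (simp add: \<pi>\<^sub>1_diff)
  moreover have "(\<lambda>n. Q (R (\<pi>\<^sub>1 (f n)) - \<pi>\<^sub>2 z)) \<longlonglongrightarrow> 0"
    using Q_le[of "f _ - z"] is_norm_nonneg[OF Q] graph
    by (intro Lim_null_comparison[OF _ lim] always_eventually) (simp add: \<pi>\<^sub>2_diff)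
  ultimately have "\<pi>\<^sub>2 z = R (\<pi>\<^sub>1 z)"
    by (rule coercive_graph_limit[OF P Q assms(3-7)])
  then show "z \<in> {p. \<pi>\<^sub>2 p = R (\<pi>\<^sub>1 p)}"
    by simp
qed

lemma closed_wrt_graph_left:
  fixes T1 T2 :: "'a::{complex_normed_vector, banach} \<Rightarrow> 'a"
  assumes c1: "contraction T1" and c2: "contraction T2"
    and n1: "is_norm (defect T1)" and n2: "is_norm (defect T2)" and "onorm (T1 \<circ> T2) < 1"
  shows "closed_wrt (sum2_norm T1 T2) {(T2 x, x) | x. True}"
proof -
  have "closed_wrt (sum2_norm T1 T2) {p. fst p = T2 (snd p)}"
    by (rule closed_wrt_graph[OF n2 n1 defect_le_norm defect_le_norm c2
          sqrt_one_minus_onorm_pos[OF contraction_comp[OF c1 c2] assms(5)]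
          defect_comp_coercive[OF c1 c2]])
      (simp_all add: sum2_norm_ge_fst sum2_norm_ge_snd)
  moreover have "{(T2 x, x) | x. True} = {p. fst p = T2 (snd p)}"
    by (auto simp: prod_eq_iff)
  ultimately show ?thesis
    by simp
qed

lemma closed_wrt_graph_right:
  fixes T1 T2 :: "'a::{complex_normed_vector, banach} \<Rightarrow> 'a"
  assumes c1: "contraction T1" and c2: "contraction T2"
    and n1: "is_norm (defect T1)" and n2: "is_norm (defect T2)" and "onorm (T2 \<circ> T1) < 1"
  shows "closed_wrt (sum2_norm T1 T2) {(x, T1 x) | x. True}"
proof -
  have "closed_wrt (sum2_norm T1 T2) {p. snd p = T1 (fst p)}"
    by (rule closed_wrt_graph[OF n1 n2 defect_le_norm defect_le_norm c1
          sqrt_one_minus_onorm_pos[OF contraction_comp[OF c2 c1] assms(5)]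
          defect_comp_coercive[OF c2 c1]])
      (simp_all add: sum2_norm_ge_fst sum2_norm_ge_snd)
  moreover have "{(x, T1 x) | x. True} = {p. snd p = T1 (fst p)}"
    by (auto simp: prod_eq_iff)
  ultimately show ?thesis
    by simp
qed

definition direct_sum_map :: "'a::ab_group_add set \<Rightarrow> 'a set \<Rightarrow> ('a \<Rightarrow> 'b::ab_group_add) \<Rightarrow> ('a \<Rightarrow> 'b) \<Rightarrow> 'a \<Rightarrow> 'b"
  where "direct_sum_map M Y V U z =
    (let p = THE p. fst p \<in> M \<and> snd p \<in> Y \<and> z = fst p + snd p in V (fst p) + U (snd p))"

lemma orth_sum_eq_decomp:
  assumes "orth_sum_eq N M Y"
  obtains m y where "m \<in> M" and "y \<in> Y" and "z = m + y"
  using assms unfolding orth_sum_eq_def by (metis prod.collapse)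

lemma direct_sum_map_add:
  assumes "orth_sum_eq N M Y" and "m \<in> M" and "y \<in> Y"
  shows "direct_sum_map M Y V U (m + y) = V m + U y"
proof -
  have "(THE p. fst p \<in> M \<and> snd p \<in> Y \<and> m + y = fst p + snd p) = (m, y)"
    using assms unfolding orth_sum_eq_def by (intro the1_equality) auto
  then show ?thesis
    unfolding direct_sum_map_def by simp
qed

lemma surj_lin_isometry_on_zero: "surj_lin_isometry_on N Y1 Y2 U \<Longrightarrow> 0 \<in> Y1 \<Longrightarrow> U 0 = 0"
  unfolding surj_lin_isometry_on_def by (metis add_0 add_right_imp_eq)

lemma clinear_map_direct_sum_map:
  assumes o: "orth_sum_eq N M1 Y1" and M: "csubspace_set M1" and Y: "csubspace_set Y1"
    and V: "surj_lin_isometry_on N M1 M2 V" and U: "surj_lin_isometry_on N Y1 Y2 U"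
  shows "clinear_map (direct_sum_map M1 Y1 V U)" (is "clinear_map ?S")
  unfolding clinear_map_def
proof (intro conjI allI)
  fix z w
  obtain m y where my: "m \<in> M1" "y \<in> Y1" "z = m + y"
    using orth_sum_eq_decomp[OF o] .
  obtain m' y' where my': "m' \<in> M1" "y' \<in> Y1" "w = m' + y'"
    using orth_sum_eq_decomp[OF o] .
  have "z + w = (m + m') + (y + y')" and "m + m' \<in> M1" and "y + y' \<in> Y1"
    using my my' M Y unfolding csubspace_set_def by (simp_all add: algebra_simps)
  then have "?S (z + w) = V (m + m') + U (y + y')"
    by (simp add: direct_sum_map_add[OF o])
  then show "?S (z + w) = ?S z + ?S w"
    using V U my my' unfolding surj_lin_isometry_on_def
    by (simp add: direct_sum_map_add[OF o] algebra_simps)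
next
  fix c z
  obtain m y where my: "m \<in> M1" "y \<in> Y1" "z = m + y"
    using orth_sum_eq_decomp[OF o] .
  then have "c *\<^sub>C z = c *\<^sub>C m + c *\<^sub>C y"
    by (simp add: scaleC_add_right)
  then show "?S (c *\<^sub>C z) = c *\<^sub>C ?S z"
    using M Y V U my unfolding csubspace_set_def surj_lin_isometry_on_def
    by (simp add: direct_sum_map_add[OF o] scaleC_add_right)
qed

lemma unitary_wrt_direct_sum_map:
  assumes N: "is_norm N" and M: "csubspace_set M1" and Y: "csubspace_set Y1"
    and V: "surj_lin_isometry_on N M1 M2 V" and U: "surj_lin_isometry_on N Y1 Y2 U"
    and o1: "orth_sum_eq N M1 Y1" and o2: "orth_sum_eq N M2 Y2"
  shows "unitary_wrt N (direct_sum_map M1 Y1 V U)" (is "unitary_wrt N ?S")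
proof -
  have "w \<in> range ?S" for w
  proof -
    obtain m2 y2 where "m2 \<in> M2" "y2 \<in> Y2" "w = m2 + y2"
      using orth_sum_eq_decomp[OF o2] .
    moreover obtain m y where "m \<in> M1" "y \<in> Y1" "m2 = V m" "y2 = U y"
      using V U \<open>m2 \<in> M2\<close> \<open>y2 \<in> Y2\<close> unfolding surj_lin_isometry_on_def by blast
    ultimately show ?thesis
      using direct_sum_map_add[OF o1] by (metis rangeI)
  qed
  moreover have "N (?S z) = N z" for z
  proof -
    obtain m y where my: "m \<in> M1" "y \<in> Y1" "z = m + y"
      using orth_sum_eq_decomp[OF o1] .
    then have "V m \<in> M2" "U y \<in> Y2" and isometric: "N (V m) = N m" "N (U y) = N y"
      using V U unfolding surj_lin_isometry_on_def by auto
    then have "(N (?S z))\<^sup>2 = (N z)\<^sup>2"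
      using o1 o2 my unfolding orth_sum_eq_def by (simp add: direct_sum_map_add[OF o1])
    then show ?thesis
      using is_norm_nonneg[OF N] by (simp add: power2_eq_iff_nonneg)
  qed
  ultimately show ?thesis
    unfolding unitary_wrt_def using clinear_map_direct_sum_map[OF o1 M Y V U] by blast
qed

lemma csubspace_set_graph_left: "clinear_map T \<Longrightarrow> csubspace_set {(T x, x) | x. True}"
  unfolding csubspace_set_def
  by (auto simp: clinear_map_zero scaleC_prod_def zero_prod_def)
    (metis clinear_map_add, metis clinear_map_scaleC)

lemma surj_lin_isometry_on_graph_swap:
  assumes c1: "contraction T1" and c2: "contraction T2" and comm: "T1 \<circ> T2 = T2 \<circ> T1"
  shows "surj_lin_isometry_on (sum2_norm T1 T2) {(T2 x, x) | x. True} {(x, T1 x) | x. True}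
    (\<lambda>p. (snd p, T1 (snd p)))"
  using c1 c2 unfolding surj_lin_isometry_on_def contraction_def
  by (auto simp: clinear_map_add clinear_map_scaleC scaleC_prod_def image_iff
      sum2_norm_graph_left[OF c1 c2] sum2_norm_graph_right[OF c1 c2 comm])

lemma unitary_graph_swap:
  assumes c1: "contraction T1" and c2: "contraction T2" and comm: "T1 \<circ> T2 = T2 \<circ> T1"
    and n1: "is_norm (defect T1)" and n2: "is_norm (defect T2)"
    and Y1: "csubspace_set Y1" and U: "surj_lin_isometry_on (sum2_norm T1 T2) Y1 Y2 U"
    and o1: "orth_sum_eq (sum2_norm T1 T2) {(T2 x, x) | x. True} Y1"
    and o2: "orth_sum_eq (sum2_norm T1 T2) {(x, T1 x) | x. True} Y2"
  shows "\<exists>S. unitary_wrt (sum2_norm T1 T2) S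
    \<and> S ` {(T2 x, x) | x. True} = {(x, T1 x) | x. True} \<and> (\<forall>x. S (T2 x, x) = (x, T1 x))"
proof (intro exI conjI)
  let ?V = "\<lambda>p. (snd p, T1 (snd p))"
  let ?S = "direct_sum_map {(T2 x, x) | x. True} Y1 ?V U"
  show "unitary_wrt (sum2_norm T1 T2) ?S"
    by (rule unitary_wrt_direct_sum_map[OF is_norm_sum2_norm[OF n1 n2]
          csubspace_set_graph_left[OF contraction_clinear_map[OF c2]] Y1
          surj_lin_isometry_on_graph_swap[OF c1 c2 comm] U o1 o2])
  have "0 \<in> Y1"
    using Y1 unfolding csubspace_set_def by blast
  then show S_graph: "\<forall>x. ?S (T2 x, x) = (x, T1 x)"
    using direct_sum_map_add[OF o1 _ \<open>0 \<in> Y1\<close>, where V = ?V and U = U]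
      surj_lin_isometry_on_zero[OF U \<open>0 \<in> Y1\<close>]
    by auto
  have "{(T2 x, x) | x. True} = range (\<lambda>x. (T2 x, x))" and "{(x, T1 x) | x. True} = range (\<lambda>x. (x, T1 x))"
    by auto
  then show "?S ` {(T2 x, x) | x. True} = {(x, T1 x) | x. True}"
    using S_graph by (simp add: image_image)
qed

theorem lemma2p2:
  fixes T1 T2 :: "'a::{complex_normed_vector, banach} \<Rightarrow> 'a"
  assumes c1: "contraction T1" and c2: "contraction T2"
    and comm: "\<forall>x. T1 (T2 x) = T2 (T1 x)"
    and n1: "is_norm (defect T1)" and n2: "is_norm (defect T2)"
    and small: "onorm (T1 \<circ> T2) < 1"
  defines "M1 \<equiv> {(T2 x, x) | x. True}"
    and "M2 \<equiv> {(x, T1 x) | x. True}"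
    and "N \<equiv> sum2_norm T1 T2"
  shows "is_norm (defect (T1 \<circ> T2))
    \<and> closed_wrt N M1 \<and> closed_wrt N M2 \<and> M1 \<inter> M2 = {0}
    \<and> ((\<exists>Y1 Y2 U. csubspace_set Y1 \<and> csubspace_set Y2 \<and> surj_lin_isometry_on N Y1 Y2 U
           \<and> orth_sum_eq N M1 Y1 \<and> orth_sum_eq N M2 Y2)
       \<longrightarrow> (\<exists>S. unitary_wrt N S \<and> S ` M1 = M2 \<and> (\<forall>x. S (T2 x, x) = (x, T1 x))))"
proof -
  have comm': "T1 \<circ> T2 = T2 \<circ> T1"
    using comm by auto
  with small have "onorm (T2 \<circ> T1) < 1"
    by simp
  then have "closed_wrt N M2"
    unfolding M2_def N_def by (rule closed_wrt_graph_right[OF c1 c2 n1 n2])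
  moreover have "(\<exists>Y1 Y2 U. csubspace_set Y1 \<and> csubspace_set Y2 \<and> surj_lin_isometry_on N Y1 Y2 U
           \<and> orth_sum_eq N M1 Y1 \<and> orth_sum_eq N M2 Y2)
       \<longrightarrow> (\<exists>S. unitary_wrt N S \<and> S ` M1 = M2 \<and> (\<forall>x. S (T2 x, x) = (x, T1 x)))"
    unfolding M1_def M2_def N_def
    by (intro impI, elim exE conjE) (rule unitary_graph_swap[OF c1 c2 comm' n1 n2])
  ultimately show ?thesis
    unfolding M1_def N_def
    using is_norm_defect_comp[OF c1 c2 n1 n2] closed_wrt_graph_left[OF c1 c2 n1 n2 small]
      graph_left_inter_graph_right[OF c1 c2 small]
    by (simp add: M2_def)
qed

end
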